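(* Fix $i\in\{1,\dots,k\}$ and let $\psi_i$ and $\mathcal{M}^\psi_i$ be defined as in the context. Then $|\mathcal{M}^\psi_i|\le 2\epsilon\cdot 2^{kn}$.
   Context: Setting. $\mathcal{N}$ is a directed network containing nodes $s_1,\dots,s_k,t_1,\dots,t_k$. The network $\mathcal{G}$ is obtained from $\mathcal{N}$ by adding new nodes $s,t,A_1,\dots,A_k,B_1,\dots,B_k$ and, for each $i$, the unit-capacity edges $a_i=(s,A_i)$, two parallel edges $x_i,y_i$ from $A_i$ to $B_i$, $z_i=(A_i,s_i)$, $z'_i=(t_i,B_i)$, and $b_i=(B_i,t)$; the incoming edges of $t$ are exactly $b_1,\dots,b_k$. Admissible error patterns $\boldsymbol r=(r_e)$ are those in which at most one edge $e$ has $r_e\neq0$, with $e\notin\{a_1,\dots,a_k,b_1,\dots,b_k\}$. The output of an edge is its input XOR $r_e$. Let $\mathcal{C}$ be a length-$n$ network code on $\mathcal{G}$. The source $s$ has message $m\in\mathcal{M}=[2^{kn}]$, where $[N]=\{1,\dots,N\}$. An edge $e=(u,v)$ of capacity $c_e$ carries a value in $[2^{nc_e}]$ computed from the signals on the incoming edges of $u$ (and from $m$ if $u=s$). The terminal $t$ decodes the tuple received on $b_1,\dots,b_k$ to an estimate of $m$. For an edge $e$, let $e(m,\boldsymbol r)$ denote the signal received on $e$ when message $m$ is sent and error pattern $\boldsymbol r$ occurs, and let $e(m)=e(m,\boldsymbol 0)$. Write $\boldsymbol b(m)=(b_1(m),\dots,b_k(m))$. Let $\mathcal{M}^{\text{good}}$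 be the set of messages $m$ such that $t$ decodes to $m$ under every admissible error pattern when $m$ is sent. Assume $\epsilon\ge0$ and $|\mathcal{M}^{\text{good}}|\ge(1-\epsilon)2^{kn}$. Define $\psi_i:[2^n]\to[2^n]$ by letting $\psi_i(\hat z)$ be a value $\hat b$ maximizing $|\{m\in\mathcal{M}^{\text{good}}: z'_i(m)=\hat z,\ b_i(m)=\hat b\}|$, with ties broken arbitrarily. Let $\mathcal{M}^\psi_i=\{m\in\mathcal{M}^{\text{good}}:\psi_i(z'_i(m))\ne b_i(m)\}$. *)

theory Defs
  imports Complex_Main
begin

definition special_edges :: "nat \<Rightarrow> (nat \<Rightarrow> 'e) \<Rightarrow> (nat \<Rightarrow> 'e) \<Rightarrow> (nat \<Rightarrow> 'e)
    \<Rightarrow> (nat \<Rightarrow> 'e) \<Rightarrow> (nat \<Rightarrow> 'e) \<Rightarrow> (nat \<Rightarrow> 'e) \<Rightarrow> 'e set" where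
  "special_edges k a x y z z' b =
     a ` {1..k} \<union> x ` {1..k} \<union> y ` {1..k} \<union> z ` {1..k} \<union> z' ` {1..k} \<union> b ` {1..k}"

definition G_edges :: "'e set \<Rightarrow> nat \<Rightarrow> (nat \<Rightarrow> 'e) \<Rightarrow> (nat \<Rightarrow> 'e) \<Rightarrow> (nat \<Rightarrow> 'e)
    \<Rightarrow> (nat \<Rightarrow> 'e) \<Rightarrow> (nat \<Rightarrow> 'e) \<Rightarrow> (nat \<Rightarrow> 'e) \<Rightarrow> 'e set" where
  "G_edges EN k a x y z z' b = EN \<union> special_edges k a x y z z' b"

text \<open>G is acyclic (as is standard, so that signals of a network code are well defined).\<close>
definition extended_network ::
  "'v set \<Rightarrow> 'e set \<Rightarrow> ('e \<Rightarrow> 'v) \<Rightarrow> ('e \<Rightarrow> 'v) \<Rightarrow> ('e \<Rightarrow> nat) \<Rightarrow> nat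
   \<Rightarrow> 'v \<Rightarrow> 'v \<Rightarrow> (nat \<Rightarrow> 'v) \<Rightarrow> (nat \<Rightarrow> 'v) \<Rightarrow> (nat \<Rightarrow> 'v) \<Rightarrow> (nat \<Rightarrow> 'v)
   \<Rightarrow> (nat \<Rightarrow> 'e) \<Rightarrow> (nat \<Rightarrow> 'e) \<Rightarrow> (nat \<Rightarrow> 'e) \<Rightarrow> (nat \<Rightarrow> 'e) \<Rightarrow> (nat \<Rightarrow> 'e) \<Rightarrow> (nat \<Rightarrow> 'e)
   \<Rightarrow> bool" where
  "extended_network VN EN tailv headv cap k s t A B sN tN a x y z z' b \<longleftrightarrow>
     finite VN \<and> finite EN \<and> (\<forall>e\<in>EN. tailv e \<in> VN \<and> headv e \<in> VN)
   \<and> (\<forall>j\<in>{1..k}. sN j \<in> VN \<and> tN j \<in> VN)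
   \<and> s \<notin> VN \<and> t \<notin> VN \<and> s \<noteq> t
   \<and> (\<forall>j\<in>{1..k}. A j \<notin> VN \<and> B j \<notin> VN \<and> A j \<noteq> s \<and> A j \<noteq> t \<and> B j \<noteq> s \<and> B j \<noteq> t)
   \<and> inj_on A {1..k} \<and> inj_on B {1..k} \<and> A ` {1..k} \<inter> B ` {1..k} = {}
   \<and> card (special_edges k a x y z z' b) = 6 * k
   \<and> special_edges k a x y z z' b \<inter> EN = {}
   \<and> (\<forall>j\<in>{1..k}.
        tailv (a j) = s \<and> headv (a j) = A j \<and> tailv (x j) = A j \<and> headv (x j) = B j
      \<and> tailv (y j) = A j \<and> headv (y j) = B j \<and> tailv (z j) = A j \<and> headv (z j) = sN j
      \<and> tailv (z' j) = tN j \<and> headv (z' j) = B j \<and> tailv (b j) = B j \<and> headv (b j) = t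
      \<and> cap (a j) = 1 \<and> cap (x j) = 1 \<and> cap (y j) = 1 \<and> cap (z j) = 1
      \<and> cap (z' j) = 1 \<and> cap (b j) = 1)
   \<and> acyclic {(tailv e, headv e) | e. e \<in> G_edges EN k a x y z z' b}"

text \<open>A length-n network code: edge e (capacity cap e) carries a value in {0..<2^(n*cap e)}
  (bit strings, identified with [2^(n cap e)]) computed by enc e from the signals on the incoming
  edges of its tail node, and from the message m only if the tail is the source s.\<close>
definition network_code ::
  "'e set \<Rightarrow> ('e \<Rightarrow> 'v) \<Rightarrow> ('e \<Rightarrow> 'v) \<Rightarrow> ('e \<Rightarrow> nat) \<Rightarrow> nat \<Rightarrow> 'v
   \<Rightarrow> ('e \<Rightarrow> ('e \<Rightarrow> nat) \<Rightarrow> nat \<Rightarrow> nat) \<Rightarrow> bool" where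
  "network_code EG tailv headv cap n s enc \<longleftrightarrow>
     (\<forall>e\<in>EG. \<forall>f m. enc e f m < 2 ^ (n * cap e))
   \<and> (\<forall>e\<in>EG. \<forall>f g m m'. (\<forall>d\<in>EG. headv d = tailv e \<longrightarrow> f d = g d) \<and> (tailv e \<noteq> s \<or> m = m')
        \<longrightarrow> enc e f m = enc e g m')"

definition is_signal ::
  "'e set \<Rightarrow> ('e \<Rightarrow> ('e \<Rightarrow> nat) \<Rightarrow> nat \<Rightarrow> nat) \<Rightarrow> (nat \<Rightarrow> ('e \<Rightarrow> nat) \<Rightarrow> 'e \<Rightarrow> nat) \<Rightarrow> bool" where
  "is_signal EG enc sig \<longleftrightarrow>
     (\<forall>m r. \<forall>e\<in>EG. sig m r e = Bit_Operations.xor (enc e (sig m r) m) (r e))"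

text \<open>Admissible error patterns: at most one edge carries a nonzero error, which is an edge of G
  not in the forbidden set Forb (the edges a_j, b_j), with value fitting the edge.\<close>
definition admissible ::
  "'e set \<Rightarrow> 'e set \<Rightarrow> ('e \<Rightarrow> nat) \<Rightarrow> nat \<Rightarrow> ('e \<Rightarrow> nat) \<Rightarrow> bool" where
  "admissible EG Forb cap n r \<longleftrightarrow>
     (\<forall>e. r e \<noteq> 0 \<longrightarrow> e \<in> EG \<and> e \<notin> Forb \<and> r e < 2 ^ (n * cap e))
   \<and> (\<forall>e e'. r e \<noteq> 0 \<longrightarrow> r e' \<noteq> 0 \<longrightarrow> e = e')"

definition good_msgs ::
  "nat \<Rightarrow> nat \<Rightarrow> 'e set \<Rightarrow> 'e set \<Rightarrow> ('e \<Rightarrow> nat) \<Rightarrow> (nat \<Rightarrow> 'e)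
   \<Rightarrow> (nat \<Rightarrow> ('e \<Rightarrow> nat) \<Rightarrow> 'e \<Rightarrow> nat) \<Rightarrow> (nat list \<Rightarrow> nat) \<Rightarrow> nat set" where
  "good_msgs k n EG Forb cap b sig dec =
     {m \<in> {..<2 ^ (k * n)}. \<forall>r. admissible EG Forb cap n r \<longrightarrow>
        dec (map (\<lambda>j. sig m r (b j)) [1..<k+1]) = m}"

end

theory Submission
  imports Defs
begin

text \<open>An admissible error on \<open>x\<^sub>i\<close> or \<open>y\<^sub>i\<close> can give that edge any value while leaving every
  other input of \<open>B\<^sub>i\<close> untouched. Call a message unalterable if no admissible error changes what
  \<open>t\<close> receives. If \<open>m\<close> and \<open>m'\<close> are unalterable and agree on \<open>z'\<^sub>i\<close>, corrupt \<open>x\<^sub>i\<close> under \<open>m\<close>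
  to its value under \<open>m'\<close> and \<open>y\<^sub>i\<close> under \<open>m'\<close> to its value under \<open>m\<close>: then \<open>B\<^sub>i\<close> sees the same
  inputs in both runs, so \<open>b\<^sub>i(m) = b\<^sub>i(m')\<close>. Hence in every \<open>z'\<^sub>i\<close>-class the unalterable messages
  share one \<open>b\<^sub>i\<close>-value, and the plurality guess \<open>\<psi>\<^sub>i\<close> is wrong on at most as many messages of the
  class as there are alterable ones. Finally, the error-free outputs of good messages and some
  altered output of each alterable one are pairwise distinct words in \<open>[2\<^sup>n]\<^sup>k\<close>, because \<open>t\<close>
  decodes all of them correctly. So good plus alterable messages number at most \<open>2\<^sup>k\<^sup>n\<close>,
  which gives even \<open>|M\<^sup>\<psi>\<^sub>i| \<le> \<epsilon> 2\<^sup>k\<^sup>n\<close>.\<close>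

lemma xor_less_power2:
  fixes u v :: nat
  assumes "u < 2 ^ n" and "v < 2 ^ n"
  shows "xor u v < 2 ^ n"
  using assms by (metis take_bit_nat_eq_self_iff take_bit_xor)

lemma acyclic_imp_wf_feeds:
  assumes "finite E" and "acyclic {(tailv e, headv e) | e. e \<in> E}"
  shows "wf {(d, e). d \<in> E \<and> e \<in> E \<and> headv d = tailv e}"
proof (rule wf_subset)
  show "wf (inv_image {(tailv e, headv e) | e. e \<in> E} tailv)"
    using assms by (intro wf_inv_image finite_acyclic_wf) auto
qed (force simp: inv_image_def)

lemma signals_agree_outside:
  assumes wf: "wf {(d, e). d \<in> E \<and> e \<in> E \<and> headv d = tailv e}"
    and local: "\<forall>e\<in>E. \<forall>f g. (\<forall>d\<in>E. headv d = tailv e \<longrightarrow> f d = g d) \<longrightarrow> enc e f = enc e g"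
    and f: "\<forall>e\<in>E. f e = xor (enc e f) (r e)"
    and g: "\<forall>e\<in>E. g e = xor (enc e g) (r' e)"
    and outside: "\<forall>e\<in>E - D. r e = r' e \<and> (\<forall>d\<in>E. headv d = tailv e \<longrightarrow> d \<notin> D)"
  shows "e \<in> E - D \<Longrightarrow> f e = g e"
proof (induction e rule: wf_induct[OF wf])
  case (1 e)
  then have "\<forall>d\<in>E. headv d = tailv e \<longrightarrow> f d = g d"
    using outside by auto
  then have "enc e f = enc e g" using local 1(2) by auto
  then show ?case using f g outside 1(2) by auto
qed

lemma signal_single_error:
  fixes sig :: "('e \<Rightarrow> nat) \<Rightarrow> 'e \<Rightarrow> nat" and v :: nat
  assumes wf: "wf {(d, e). d \<in> E \<and> e \<in> E \<and> headv d = tailv e}"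
    and local: "\<forall>e\<in>E. \<forall>f g. (\<forall>d\<in>E. headv d = tailv e \<longrightarrow> f d = g d) \<longrightarrow> enc e f = enc e g"
    and sig: "\<forall>r. \<forall>e\<in>E. sig r e = xor (enc e (sig r)) (r e)"
    and w: "w \<in> E" "w \<in> D"
    and D: "\<forall>e\<in>E - D. \<forall>d\<in>E. headv d = tailv e \<longrightarrow> d \<notin> D"
    and w_inputs: "\<forall>d\<in>E. headv d = tailv w \<longrightarrow> d \<notin> D"
  defines "r \<equiv> \<lambda>e. if e = w then v else 0"
  shows "\<forall>e\<in>E - D. sig r e = sig (\<lambda>_. 0) e"
    and "sig r w = xor (sig (\<lambda>_. 0) w) v"
proof -
  show agree: "\<forall>e\<in>E - D. sig r e = sig (\<lambda>_. 0) e"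
    using signals_agree_outside[OF wf local, of "sig r" r "sig (\<lambda>_. 0)" "\<lambda>_. 0" D]
      sig w D by (auto simp: r_def)
  have "enc w (sig r) = enc w (sig (\<lambda>_. 0))"
    using local w agree w_inputs by blast
  then show "sig r w = xor (sig (\<lambda>_. 0) w) v"
    using sig w by (metis r_def xor.right_neutral)
qed

lemma card_add_card_le_of_decodable_codes:
  assumes "finite W"
    and out: "\<forall>m\<in>S. out m \<in> W \<and> dec (out m) = m"
    and "Alt \<subseteq> S"
    and out': "\<forall>m\<in>Alt. out' m \<in> W \<and> out' m \<noteq> out m \<and> dec (out' m) = m"
  shows "card S + card Alt \<le> card W"
proof -
  have inj: "inj_on out S" "inj_on out' Alt"
    using out out' by (metis inj_onI)+
  have disjoint: "out ` S \<inter> out' ` Alt = {}"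
    using out out' \<open>Alt \<subseteq> S\<close> by fastforce
  have "finite (out ` S)" "finite (out' ` Alt)"
    using out out' \<open>finite W\<close> by (auto intro: finite_subset)
  then have "finite S" "finite Alt"
    using inj by (auto dest: finite_imageD)
  then have "card S + card Alt = card (out ` S \<union> out' ` Alt)"
    by (simp add: card_Un_disjoint disjoint card_image inj)
  also have "\<dots> \<le> card W"
    using out out' \<open>finite W\<close> by (intro card_mono) auto
  finally show ?thesis .
qed

lemma card_le_card_if_fibres_le:
  assumes "finite X" "finite Y"
    and fibres: "\<And>v. v \<in> f ` X \<Longrightarrow> card {x \<in> X. f x = v} \<le> card {y \<in> Y. f y = v}"
  shows "card X \<le> card Y"
proof -
  have "card X = card (\<Union>v\<in>f ` X. {x \<in> X. f x = v})"
    by (rule arg_cong[where f = card]) auto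
  also have "\<dots> = (\<Sum>v\<in>f ` X. card {x \<in> X. f x = v})"
    using \<open>finite X\<close> by (intro card_UN_disjoint) auto
  also have "\<dots> \<le> (\<Sum>v\<in>f ` X. card {y \<in> Y. f y = v})"
    using fibres by (rule sum_mono)
  also have "\<dots> = card (\<Union>v\<in>f ` X. {y \<in> Y. f y = v})"
    using \<open>finite X\<close> \<open>finite Y\<close> by (intro card_UN_disjoint[symmetric]) auto
  also have "\<dots> \<le> card Y"
    using \<open>finite Y\<close> by (intro card_mono) auto
  finally show ?thesis .
qed

lemma card_plurality_mismatch_le:
  assumes "finite S" and "T \<subseteq> S"
    and plurality: "\<forall>m0\<in>S. card {m \<in> S. \<zeta> m = \<zeta> m0 \<and> \<beta> m = \<beta> m0}
                          \<le> card {m \<in> S. \<zeta> m = \<zeta> m0 \<and> \<beta> m = \<psi> (\<zeta> m0)}"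
    and consistent: "\<forall>m\<in>T. \<forall>m'\<in>T. \<zeta> m = \<zeta> m' \<longrightarrow> \<beta> m = \<beta> m'"
  shows "card {m \<in> S. \<psi> (\<zeta> m) \<noteq> \<beta> m} \<le> card (S - T)"
proof -
  let ?Mis = "{m \<in> S. \<psi> (\<zeta> m) \<noteq> \<beta> m}"
  have fibres: "card {m \<in> ?Mis. \<zeta> m = v} \<le> card {m \<in> S - T. \<zeta> m = v}" for v
  proof (cases "\<exists>m0\<in>T. \<zeta> m0 = v \<and> \<beta> m0 \<noteq> \<psi> v")
    case False
    then have "{m \<in> ?Mis. \<zeta> m = v} \<subseteq> {m \<in> S - T. \<zeta> m = v}" by auto
    then show ?thesis using \<open>finite S\<close> by (intro card_mono) auto
  next
    case True
    then obtain m0 where m0: "m0 \<in> T" "\<zeta> m0 = v" "\<beta> m0 \<noteq> \<psi> v" by blast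
    have T_fibre: "\<beta> m = \<beta> m0" if "m \<in> T" "\<zeta> m = v" for m
      using consistent m0 that by blast
    let ?Off = "{m \<in> S - T. \<zeta> m = v \<and> \<beta> m \<noteq> \<psi> v}"
    let ?On = "{m \<in> S - T. \<zeta> m = v \<and> \<beta> m = \<psi> v}"
    let ?Like_m0 = "{m \<in> S. \<zeta> m = v \<and> \<beta> m = \<beta> m0}"
    \<comment> \<open>In this fibre \<open>T\<close> only takes the value \<open>\<beta> m0 \<noteq> \<psi> v\<close>, so \<open>\<psi> v\<close> is only taken outside \<open>T\<close>.\<close>
    have "card ?Like_m0 \<le> card {m \<in> S. \<zeta> m = v \<and> \<beta> m = \<psi> v}"
      using plurality m0 \<open>T \<subseteq> S\<close> by auto
    also have "{m \<in> S. \<zeta> m = v \<and> \<beta> m = \<psi> v} = ?On"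
      using T_fibre m0(3) by auto
    finally have like_on: "card ?Like_m0 \<le> card ?On" .
    have "{m \<in> ?Mis. \<zeta> m = v} \<subseteq> ?Off \<union> ?Like_m0"
      using T_fibre by auto
    then have "card {m \<in> ?Mis. \<zeta> m = v} \<le> card (?Off \<union> ?Like_m0)"
      using \<open>finite S\<close> by (intro card_mono) auto
    also have "\<dots> \<le> card ?Off + card ?Like_m0"
      by (rule card_Un_le)
    also have "\<dots> \<le> card ?Off + card ?On"
      using like_on by simp
    also have "\<dots> = card (?Off \<union> ?On)"
      using \<open>finite S\<close> by (intro card_Un_disjoint[symmetric]) auto
    also have "?Off \<union> ?On = {m \<in> S - T. \<zeta> m = v}"
      by auto
    finally show ?thesis .
  qed
  show ?thesis
    by (rule card_le_card_if_fibres_le[where f = \<zeta>, OF _ _ fibres]) (use \<open>finite S\<close> in auto)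
qed

locale extended_network_code =
  fixes VN :: "'v set" and EN :: "'e set" and tailv headv :: "'e \<Rightarrow> 'v" and cap :: "'e \<Rightarrow> nat"
    and k n :: nat and s t :: 'v and A B sN tN :: "nat \<Rightarrow> 'v"
    and a x y z z' b :: "nat \<Rightarrow> 'e"
    and enc :: "'e \<Rightarrow> ('e \<Rightarrow> nat) \<Rightarrow> nat \<Rightarrow> nat"
    and sig :: "nat \<Rightarrow> ('e \<Rightarrow> nat) \<Rightarrow> 'e \<Rightarrow> nat"
  assumes network: "extended_network VN EN tailv headv cap k s t A B sN tN a x y z z' b"
    and code: "network_code (G_edges EN k a x y z z' b) tailv headv cap n s enc"
    and signal: "is_signal (G_edges EN k a x y z z' b) enc sig"
begin

abbreviation EG :: "'e set" where
  "EG \<equiv> G_edges EN k a x y z z' b"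

abbreviation admissible_error :: "('e \<Rightarrow> nat) \<Rightarrow> bool" where
  "admissible_error \<equiv> admissible EG (a ` {1..k} \<union> b ` {1..k}) cap n"

lemma special_edge_ends:
  assumes "j \<in> {1..k}"
  shows "tailv (a j) = s" "headv (a j) = A j" "tailv (x j) = A j" "headv (x j) = B j"
    "tailv (y j) = A j" "headv (y j) = B j" "tailv (z j) = A j" "headv (z j) = sN j"
    "tailv (z' j) = tN j" "headv (z' j) = B j" "tailv (b j) = B j" "headv (b j) = t"
    "cap (x j) = 1" "cap (y j) = 1" "cap (z' j) = 1" "cap (b j) = 1"
  using network assms unfolding extended_network_def by auto

lemma terminals_in_N: "j \<in> {1..k} \<Longrightarrow> sN j \<in> VN \<and> tN j \<in> VN"
  using network unfolding extended_network_def by blast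

lemma fresh_nodes:
  "j \<in> {1..k} \<Longrightarrow> A j \<notin> VN \<and> B j \<notin> VN \<and> A j \<noteq> s \<and> A j \<noteq> t \<and> B j \<noteq> s \<and> B j \<noteq> t"
  "s \<notin> VN" "t \<notin> VN" "s \<noteq> t"
  using network unfolding extended_network_def by blast+

lemma A_neq_B: "i \<in> {1..k} \<Longrightarrow> j \<in> {1..k} \<Longrightarrow> A j \<noteq> B i"
  using network unfolding extended_network_def by blast

lemma B_eq_iff: "i \<in> {1..k} \<Longrightarrow> j \<in> {1..k} \<Longrightarrow> B j = B i \<longleftrightarrow> j = i"
  using network unfolding extended_network_def by (auto dest: inj_onD)

lemma N_edge_ends: "e \<in> EN \<Longrightarrow> tailv e \<in> VN \<and> headv e \<in> VN"
  using network unfolding extended_network_def by blast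

lemma edge_cases:
  assumes "e \<in> EG"
  obtains "e \<in> EN"
    | j where "j \<in> {1..k}" "e \<in> {a j, x j, y j, z j, z' j, b j}"
  using assms unfolding G_edges_def special_edges_def by blast

lemma in_edge_B_cases:
  assumes i: "i \<in> {1..k}" and "d \<in> EG" "headv d = B i"
  shows "d \<in> {x i, y i, z' i}"
  using \<open>d \<in> EG\<close>
proof (cases rule: edge_cases)
  case 1
  then show ?thesis using assms N_edge_ends fresh_nodes(1)[OF i] by metis
next
  case (2 j)
  then show ?thesis
    using assms terminals_in_N[OF 2(1)] fresh_nodes(1)[OF i] A_neq_B[OF i 2(1)] B_eq_iff[OF i 2(1)]
    by (auto simp: special_edge_ends[OF 2(1)] special_edge_ends[OF i])
qed

lemma out_edge_B_eq:
  assumes i: "i \<in> {1..k}" and "e \<in> EG" "tailv e = B i"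
  shows "e = b i"
  using \<open>e \<in> EG\<close>
proof (cases rule: edge_cases)
  case 1
  then show ?thesis using assms N_edge_ends fresh_nodes(1)[OF i] by metis
next
  case (2 j)
  then show ?thesis
    using assms terminals_in_N[OF 2(1)] fresh_nodes(1)[OF i] A_neq_B[OF i 2(1)] B_eq_iff[OF i 2(1)]
    by (auto simp: special_edge_ends[OF 2(1)] special_edge_ends[OF i])
qed

lemma no_out_edge_t:
  assumes "e \<in> EG"
  shows "tailv e \<noteq> t"
  using assms
proof (cases rule: edge_cases)
  case 1
  then show ?thesis using N_edge_ends fresh_nodes(3) by metis
next
  case (2 j)
  then show ?thesis
    using terminals_in_N[OF 2(1)] fresh_nodes(1)[OF 2(1)] fresh_nodes(3,4)
    by (auto simp: special_edge_ends[OF 2(1)])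
qed

lemma special_edges_indexed:
  "special_edges k a x y z z' b = (\<lambda>(c, j). ([a, x, y, z, z', b] ! c) j) ` ({..<6} \<times> {1..k})"
proof -
  have "{..<6::nat} = {0, 1, 2, 3, 4, 5}" by auto
  then show ?thesis
    unfolding special_edges_def
    by (simp add: Times_insert_left image_Un image_image numeral_eq_Suc Un_ac)
qed

text \<open>The hypothesis \<open>card (special_edges \<dots>) = 6 * k\<close> says exactly that this indexing is injective.\<close>

lemma special_edges_inj: "inj_on (\<lambda>(c, j). ([a, x, y, z, z', b] ! c) j) ({..<6} \<times> {1..k})"
  using network unfolding extended_network_def special_edges_indexed
  by (intro eq_card_imp_inj_on) (simp_all add: card_cartesian_product)

lemma x_neq_y: "i \<in> {1..k} \<Longrightarrow> x i \<noteq> y i"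
  using inj_onD[OF special_edges_inj, of "(1, i)" "(2, i)"] by auto

lemma finite_EG: "finite EG"
  using network unfolding extended_network_def by (simp add: G_edges_def special_edges_def)

lemma wf_feeds_EG: "wf {(d, e). d \<in> EG \<and> e \<in> EG \<and> headv d = tailv e}"
proof (rule acyclic_imp_wf_feeds[OF finite_EG])
  show "acyclic {(tailv e, headv e) | e. e \<in> EG}"
    using network unfolding extended_network_def by blast
qed

lemma encoder_local:
  "\<forall>e\<in>EG. \<forall>f g. (\<forall>d\<in>EG. headv d = tailv e \<longrightarrow> f d = g d) \<longrightarrow> enc e f m = enc e g m"
  using code unfolding network_code_def by blast

lemma signal_eq: "e \<in> EG \<Longrightarrow> sig m r e = xor (enc e (sig m r) m) (r e)"
  using signal unfolding is_signal_def by blast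

lemma signal_less:
  assumes "e \<in> EG" "cap e = 1" "r e = 0"
  shows "sig m r e < 2 ^ n"
  using signal_eq[of e m r] code assms unfolding network_code_def
  by (metis mult_1_right xor.right_neutral)

lemma special_edges_in_EG:
  "j \<in> {1..k} \<Longrightarrow> a j \<in> EG \<and> x j \<in> EG \<and> y j \<in> EG \<and> z j \<in> EG \<and> z' j \<in> EG \<and> b j \<in> EG"
  unfolding G_edges_def special_edges_def by blast

lemma admissible_error_sets_parallel_edge:
  assumes i: "i \<in> {1..k}" and w: "w \<in> {x i, y i}" and u: "u < 2 ^ n"
  obtains r where "admissible_error r" "sig m r w = u"
    "\<forall>e\<in>EG - {w, b i}. sig m r e = sig m (\<lambda>_. 0) e"
proof -
  \<comment> \<open>The error on \<open>w\<close> can only propagate to \<open>b\<^sub>i\<close>: \<open>B\<^sub>i\<close> feeds only \<open>b\<^sub>i\<close>, and \<open>t\<close> feeds nothing.\<close>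
  have w_EG: "w \<in> EG" and w_ends: "tailv w = A i" "headv w = B i" and "cap w = 1"
    using w special_edges_in_EG[OF i] special_edge_ends[OF i] by auto
  define v where "v = xor (sig m (\<lambda>_. 0) w) u"
  define r where "r = (\<lambda>e. if e = w then v else 0)"
  have downstream_closed: "\<forall>e\<in>EG - {w, b i}. \<forall>d\<in>EG. headv d = tailv e \<longrightarrow> d \<notin> {w, b i}"
  proof (intro ballI impI)
    fix e d assume e: "e \<in> EG - {w, b i}" and d: "d \<in> EG" "headv d = tailv e"
    show "d \<notin> {w, b i}"
    proof
      assume "d \<in> {w, b i}"
      then have "tailv e = B i \<or> tailv e = t" using d w_ends special_edge_ends[OF i] by auto
      then show False using e out_edge_B_eq[OF i] no_out_edge_t by blast
    qed
  qed
  have w_inputs: "\<forall>d\<in>EG. headv d = tailv w \<longrightarrow> d \<notin> {w, b i}"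
    using w_ends special_edge_ends[OF i] fresh_nodes(1)[OF i] A_neq_B[OF i i] by auto
  have sig_m: "\<forall>r. \<forall>e\<in>EG. sig m r e = xor (enc e (sig m r) m) (r e)"
    by (intro allI ballI signal_eq)
  have single_error: "\<forall>e\<in>EG - {w, b i}. sig m r e = sig m (\<lambda>_. 0) e"
    "sig m r w = xor (sig m (\<lambda>_. 0) w) v"
    unfolding r_def
    by (rule signal_single_error[OF wf_feeds_EG encoder_local sig_m w_EG insertI1
          downstream_closed w_inputs])+
  have "v < 2 ^ n"
    unfolding v_def by (rule xor_less_power2[OF signal_less[OF w_EG \<open>cap w = 1\<close>] u]) simp
  moreover have "w \<notin> a ` {1..k} \<union> b ` {1..k}"
  proof
    assume "w \<in> a ` {1..k} \<union> b ` {1..k}"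
    then obtain j where j: "j \<in> {1..k}" "w = a j \<or> w = b j" by blast
    then have "headv w = A j \<or> headv w = t" using special_edge_ends[OF j(1)] by auto
    then show False using w_ends A_neq_B[OF i j(1)] fresh_nodes(1)[OF i] by auto
  qed
  ultimately have "admissible_error r"
    unfolding admissible_def r_def using w_EG \<open>cap w = 1\<close> by auto
  moreover have "sig m r w = u"
    using single_error(2) by (simp add: v_def flip: xor.assoc)
  ultimately show ?thesis
    using that single_error(1) by blast
qed

lemma encoder_eq_off_source:
  assumes "e \<in> EG" "\<forall>d\<in>EG. headv d = tailv e \<longrightarrow> f d = g d" "tailv e \<noteq> s"
  shows "enc e f m = enc e g m'"
  using code assms unfolding network_code_def by blast

lemma admissible_error_b: "admissible_error r \<Longrightarrow> j \<in> {1..k} \<Longrightarrow> r (b j) = 0"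
  unfolding admissible_def by blast

lemma admissible_error_zero: "admissible_error (\<lambda>_. 0)"
  unfolding admissible_def by simp

definition received :: "nat \<Rightarrow> ('e \<Rightarrow> nat) \<Rightarrow> nat list" where
  "received m r = map (\<lambda>j. sig m r (b j)) [1..<k+1]"

definition unalterable :: "nat \<Rightarrow> bool" where
  "unalterable m \<longleftrightarrow> (\<forall>r. admissible_error r \<longrightarrow> received m r = received m (\<lambda>_. 0))"

lemma unalterable_signal_b:
  assumes "unalterable m" "admissible_error r" "i \<in> {1..k}"
  shows "sig m r (b i) = sig m (\<lambda>_. 0) (b i)"
proof -
  have "received m r ! (i - 1) = received m (\<lambda>_. 0) ! (i - 1)"
    using assms unfolding unalterable_def by simp
  moreover have "i - 1 < length [1..<k+1]" "[1..<k+1] ! (i - 1) = i"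
    using assms(3) by (auto simp del: upt_Suc)
  ultimately show ?thesis unfolding received_def by simp
qed

lemma unalterable_same_z'_same_b:
  assumes i: "i \<in> {1..k}" and m: "unalterable m" and m': "unalterable m'"
    and same_z': "sig m (\<lambda>_. 0) (z' i) = sig m' (\<lambda>_. 0) (z' i)"
  shows "sig m (\<lambda>_. 0) (b i) = sig m' (\<lambda>_. 0) (b i)"
proof -
  note EG_i = special_edges_in_EG[OF i] and ends_i = special_edge_ends[OF i]
  obtain r where r: "admissible_error r" "sig m r (x i) = sig m' (\<lambda>_. 0) (x i)"
      "\<forall>e\<in>EG - {x i, b i}. sig m r e = sig m (\<lambda>_. 0) e"
    using admissible_error_sets_parallel_edge[OF i, of "x i" "sig m' (\<lambda>_. 0) (x i)" m] signal_less EG_i ends_i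
    by auto
  obtain r' where r': "admissible_error r'" "sig m' r' (y i) = sig m (\<lambda>_. 0) (y i)"
      "\<forall>e\<in>EG - {y i, b i}. sig m' r' e = sig m' (\<lambda>_. 0) e"
    using admissible_error_sets_parallel_edge[OF i, of "y i" "sig m (\<lambda>_. 0) (y i)" m'] signal_less EG_i ends_i
    by auto
  have distinct: "x i \<noteq> y i" "x i \<noteq> b i" "y i \<noteq> b i" "z' i \<notin> {x i, y i, b i}"
    using x_neq_y[OF i] ends_i terminals_in_N[OF i] fresh_nodes(1)[OF i] A_neq_B[OF i i]
    by (metis insertE empty_iff)+
  have "\<forall>d\<in>EG. headv d = tailv (b i) \<longrightarrow> sig m r d = sig m' r' d"
  proof (intro ballI impI)
    fix d assume "d \<in> EG" "headv d = tailv (b i)"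
    then have "d \<in> {x i, y i, z' i}" using in_edge_B_cases[OF i] ends_i by simp
    then show "sig m r d = sig m' r' d"
      using distinct r(2,3) r'(2,3) same_z' EG_i by auto
  qed
  then have "enc (b i) (sig m r) m = enc (b i) (sig m' r') m'"
    using encoder_eq_off_source EG_i ends_i fresh_nodes(1)[OF i] by simp
  then have "sig m r (b i) = sig m' r' (b i)"
    using signal_eq EG_i admissible_error_b[OF r(1) i] admissible_error_b[OF r'(1) i] by simp
  then show ?thesis
    using unalterable_signal_b[OF m r(1) i] unalterable_signal_b[OF m' r'(1) i] by simp
qed

lemma card_good_plus_card_alterable:
  fixes dec :: "nat list \<Rightarrow> nat"
  defines "Good \<equiv> good_msgs k n EG (a ` {1..k} \<union> b ` {1..k}) cap b sig dec"
  shows "card Good + card {m \<in> Good. \<not> unalterable m} \<le> 2 ^ (k * n)"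
proof -
  let ?W = "{ws. set ws \<subseteq> {..<(2::nat) ^ n} \<and> length ws = k}"
  have received_W: "received m r \<in> ?W" if "admissible_error r" for m r
    using signal_less special_edges_in_EG special_edge_ends admissible_error_b[OF that]
    unfolding received_def by auto
  have decodes: "dec (received m r) = m" if "m \<in> Good" "admissible_error r" for m r
    using that unfolding Good_def good_msgs_def received_def by blast
  define alter where
    "alter m = (SOME r. admissible_error r \<and> received m r \<noteq> received m (\<lambda>_. 0))" for m
  have alter: "admissible_error (alter m) \<and> received m (alter m) \<noteq> received m (\<lambda>_. 0)"
    if "\<not> unalterable m" for m
    using that unfolding unalterable_def alter_def by (metis (mono_tags, lifting) someI_ex)
  have "card Good + card {m \<in> Good. \<not> unalterable m} \<le> card ?W"
  proof (rule card_add_card_le_of_decodable_codes[where out = "\<lambda>m. received m (\<lambda>_. 0)"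
        and out' = "\<lambda>m. received m (alter m)" and dec = dec])
    show "finite ?W" by (simp add: finite_lists_length_eq)
  qed (use received_W decodes alter admissible_error_zero in auto)
  also have "card ?W = 2 ^ (k * n)"
    by (simp add: card_lists_length_eq power_mult[symmetric] mult.commute)
  finally show ?thesis .
qed


lemma card_plurality_mismatch_le_card_alterable:
  fixes dec :: "nat list \<Rightarrow> nat" and psi :: "nat \<Rightarrow> nat"
  defines "Good \<equiv> good_msgs k n EG (a ` {1..k} \<union> b ` {1..k}) cap b sig dec"
  assumes i: "i \<in> {1..k}"
    and psi: "\<forall>zh < 2 ^ n. psi zh < 2 ^ n \<and>
       (\<forall>bh < 2 ^ n. card {m \<in> Good. sig m (\<lambda>_. 0) (z' i) = zh \<and> sig m (\<lambda>_. 0) (b i) = bh}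
          \<le> card {m \<in> Good. sig m (\<lambda>_. 0) (z' i) = zh \<and> sig m (\<lambda>_. 0) (b i) = psi zh})"
  shows "card {m \<in> Good. psi (sig m (\<lambda>_. 0) (z' i)) \<noteq> sig m (\<lambda>_. 0) (b i)}
    \<le> card {m \<in> Good. \<not> unalterable m}"
proof -
  have "card {m \<in> Good. psi (sig m (\<lambda>_. 0) (z' i)) \<noteq> sig m (\<lambda>_. 0) (b i)}
      \<le> card (Good - {m \<in> Good. unalterable m})"
  proof (rule card_plurality_mismatch_le[where \<zeta> = "\<lambda>m. sig m (\<lambda>_. 0) (z' i)"
        and \<beta> = "\<lambda>m. sig m (\<lambda>_. 0) (b i)"])
    show "finite Good" unfolding Good_def good_msgs_def by simp
    show "\<forall>m0\<in>Good. card {m \<in> Good. sig m (\<lambda>_. 0) (z' i) = sig m0 (\<lambda>_. 0) (z' i)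
                                  \<and> sig m (\<lambda>_. 0) (b i) = sig m0 (\<lambda>_. 0) (b i)}
        \<le> card {m \<in> Good. sig m (\<lambda>_. 0) (z' i) = sig m0 (\<lambda>_. 0) (z' i)
                         \<and> sig m (\<lambda>_. 0) (b i) = psi (sig m0 (\<lambda>_. 0) (z' i))}"
      using psi signal_less special_edges_in_EG[OF i] special_edge_ends[OF i] by simp
    show "\<forall>m\<in>{m \<in> Good. unalterable m}. \<forall>m'\<in>{m \<in> Good. unalterable m}.
        sig m (\<lambda>_. 0) (z' i) = sig m' (\<lambda>_. 0) (z' i) \<longrightarrow> sig m (\<lambda>_. 0) (b i) = sig m' (\<lambda>_. 0) (b i)"
      using unalterable_same_z'_same_b[OF i] by blast
  qed auto
  also have "Good - {m \<in> Good. unalterable m} = {m \<in> Good. \<not> unalterable m}"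
    by auto
  finally show ?thesis .
qed

end

theorem lemma1:
  fixes VN :: "'v set" and EN :: "'e set" and tailv headv :: "'e \<Rightarrow> 'v" and cap :: "'e \<Rightarrow> nat"
    and k n i :: nat and s t :: 'v and A B sN tN :: "nat \<Rightarrow> 'v"
    and a x y z z' b :: "nat \<Rightarrow> 'e"
    and enc :: "'e \<Rightarrow> ('e \<Rightarrow> nat) \<Rightarrow> nat \<Rightarrow> nat"
    and sig :: "nat \<Rightarrow> ('e \<Rightarrow> nat) \<Rightarrow> 'e \<Rightarrow> nat"
    and dec :: "nat list \<Rightarrow> nat" and eps :: real and psi :: "nat \<Rightarrow> nat"
  defines "EG \<equiv> G_edges EN k a x y z z' b"
    and "Good \<equiv> good_msgs k n (G_edges EN k a x y z z' b) (a ` {1..k} \<union> b ` {1..k}) cap b sig dec"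
  assumes G: "extended_network VN EN tailv headv cap k s t A B sN tN a x y z z' b"
    and code: "network_code EG tailv headv cap n s enc"
    and sig: "is_signal EG enc sig"
    and eps: "eps \<ge> 0"
    and good_large: "real (card Good) \<ge> (1 - eps) * 2 ^ (k * n)"
    and i: "i \<in> {1..k}"
    and psi: "\<forall>zh < 2 ^ n. psi zh < 2 ^ n \<and>
       (\<forall>bh < 2 ^ n. card {m \<in> Good. sig m (\<lambda>_. 0) (z' i) = zh \<and> sig m (\<lambda>_. 0) (b i) = bh}
          \<le> card {m \<in> Good. sig m (\<lambda>_. 0) (z' i) = zh \<and> sig m (\<lambda>_. 0) (b i) = psi zh})"
  shows "real (card {m \<in> Good. psi (sig m (\<lambda>_. 0) (z' i)) \<noteq> sig m (\<lambda>_. 0) (b i)})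
           \<le> 2 * eps * 2 ^ (k * n)"
proof -
  interpret extended_network_code VN EN tailv headv cap k n s t A B sN tN a x y z z' b enc sig
    by (rule extended_network_code.intro[OF G code[unfolded EG_def] sig[unfolded EG_def]])
  let ?Mis = "{m \<in> Good. psi (sig m (\<lambda>_. 0) (z' i)) \<noteq> sig m (\<lambda>_. 0) (b i)}"
  have "card ?Mis + card Good \<le> 2 ^ (k * n)"
    using card_plurality_mismatch_le_card_alterable[OF i psi[unfolded Good_def]]
      card_good_plus_card_alterable[of dec]
    unfolding Good_def by linarith
  then have "real (card ?Mis) + real (card Good) \<le> 2 ^ (k * n)"
    by (simp flip: of_nat_add of_nat_power)
  moreover have "(1 - eps) * 2 ^ (k * n) = 2 ^ (k * n) - eps * 2 ^ (k * n)"
    by (simp add: algebra_simps)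
  moreover have "0 \<le> eps * 2 ^ (k * n)"
    using eps by simp
  ultimately show ?thesis
    using good_large by linarith
qed

end
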